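(* Let $r,i\in\mathbb{Z}$ and $\beta\in\Bbbk^*$ with $\beta^n\ne1$. Then $c_\beta^{r,i}(k,0)\ne0$ for all $0\le k\le n$, and $c_\beta^{r,i}(n,l)=0$ for all $1\le l\le n-1$. (Equivalently: in the lower triangular matrix $\mathcal{A}_\beta^{r,i}(n)=(c_\beta^{r,i}(k,l))_{0\le l\le k\le n}$, all first-column entries are nonzero and the last row is zero except for its first and last entries.)
   Context: $\Bbbk$ is an algebraically closed field of characteristic $0$; $n,w$ positive integers, $\gamma$ a primitive $n$-th root of unity. $H=B(n,w,\gamma)$ is the Hopf algebra generated by $x^{\pm1},g,y$ with relations $xx^{-1}=x^{-1}x=1$, $xg=gx$, $xy=yx$, $yg=\gamma gy$, $y^n=1-x^w=1-g^n$, with $\Delta(y)=y\otimes g+1\otimes y$, $x,g$ group-like, $S(x)=x^{-1}$, $S(g)=g^{-1}$, $S(y)=-yg^{-1}$. The elements $c_\beta^{r,i}(k,l)\in H$ ($0\le l\le k$) are defined by $c_\beta^{r,i}(0,0)=x^rg^i$ and, for $k\ge0$: $c_\beta^{r,i}(k+1,0)=c_\beta^{r,i}(k,0)S(y)+\beta yc_\beta^{r,i}(k,0)S(g)$; for $0<l<k+1$, $c_\beta^{r,i}(k+1,l)=c_\beta^{r,i}(k,l)S(y)+\beta\gamma^{-l}yc_\beta^{r,i}(k,l)S(g)+c_\beta^{r,i}(k,l-1)S(g)$; $c_\beta^{r,i}(k+1,k+1)=c_\beta^{r,i}(k,k)S(g)$. *)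

theory Defs
  imports "HOL-Library.Poly_Mapping" "HOL-Computational_Algebra.Polynomial"
begin

text \<open>
  Concrete model of the Hopf algebra H = B(n,w,gamma) (only its algebra structure is
  needed for the statement).  We use the PBW basis
    x^a g^b y^c,  a :: int,  0 <= b < n,  0 <= c < n,
  so an element of H is a finitely supported coefficient function on the keys (a,b,c).
  The multiplication of basis monomials is derived from the defining relations
  xg = gx, xy = yx, yg = gamma gy, g^n = x^w, y^n = 1 - x^w:
    (x^a g^b y^c)(x^a' g^b' y^c') = gamma^(c b') x^(a+a') g^(b+b') y^(c+c'),
  followed by the reductions g^n = x^w and y^n = 1 - x^w.
\<close>

type_synonym 'k hel = "(int \<times> nat \<times> nat) \<Rightarrow>\<^sub>0 'k"

definition algebraically_closed :: "'k::field itself \<Rightarrow> bool" where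
  "algebraically_closed _ \<longleftrightarrow> (\<forall>p :: 'k poly. degree p > 0 \<longrightarrow> (\<exists>z. poly p z = 0))"

definition primitive_root :: "nat \<Rightarrow> 'k::field \<Rightarrow> bool" where
  "primitive_root n \<gamma> \<longleftrightarrow> \<gamma> ^ n = 1 \<and> (\<forall>m. 0 < m \<and> m < n \<longrightarrow> \<gamma> ^ m \<noteq> 1)"

definition mono_mult :: "nat \<Rightarrow> nat \<Rightarrow> 'k::field \<Rightarrow> 'k
     \<Rightarrow> int \<times> nat \<times> nat \<Rightarrow> int \<times> nat \<times> nat \<Rightarrow> 'k hel" where
  "mono_mult n w \<gamma> s p q =
     (case p of (a, b, c) \<Rightarrow> case q of (a', b', c') \<Rightarrow>
       let t = s * \<gamma> ^ (c * b');
           B = b + b'; C = c + c';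
           A = a + a' + (if n \<le> B then int w else 0);
           B' = (if n \<le> B then B - n else B)
       in if n \<le> C
          then Poly_Mapping.single (A, B', C - n) t - Poly_Mapping.single (A + int w, B', C - n) t
          else Poly_Mapping.single (A, B', C) t)"

definition hmult :: "nat \<Rightarrow> nat \<Rightarrow> 'k::field \<Rightarrow> 'k hel \<Rightarrow> 'k hel \<Rightarrow> 'k hel" where
  "hmult n w \<gamma> f h =
     (\<Sum>p\<in>Poly_Mapping.keys f. \<Sum>q\<in>Poly_Mapping.keys h. mono_mult n w \<gamma> (Poly_Mapping.lookup f p * Poly_Mapping.lookup h q) p q)"

definition hscale :: "'k::field \<Rightarrow> 'k hel \<Rightarrow> 'k hel" where
  "hscale \<beta> f = Poly_Mapping.map (\<lambda>v. \<beta> * v) f"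

text \<open>The element x^r g^i of H for r, i :: int (g is invertible since g^n = x^w).\<close>
definition hxg :: "nat \<Rightarrow> nat \<Rightarrow> int \<Rightarrow> int \<Rightarrow> 'k::field hel" where
  "hxg n w r i = Poly_Mapping.single (r + int w * (i div int n), nat (i mod int n), 0) 1"

text \<open>The generator y (for n = 1 one has y = y^1 = 1 - x^w).\<close>
definition hy :: "nat \<Rightarrow> nat \<Rightarrow> 'k::field hel" where
  "hy n w = (if n = 1 then Poly_Mapping.single (0, 0, 0) 1 - Poly_Mapping.single (int w, 0, 0) 1
             else Poly_Mapping.single (0, 0, 1) 1)"

text \<open>Antipode values S(g) = g^{-1} and S(y) = - y g^{-1}.\<close>
definition hSg :: "nat \<Rightarrow> nat \<Rightarrow> 'k::field hel" where
  "hSg n w = hxg n w 0 (-1)"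

definition hSy :: "nat \<Rightarrow> nat \<Rightarrow> 'k::field \<Rightarrow> 'k hel" where
  "hSy n w \<gamma> = - hmult n w \<gamma> (hy n w) (hSg n w)"

text \<open>The elements c_beta^{r,i}(k,l); values for l > k are set to 0 (unused).\<close>
fun cel :: "nat \<Rightarrow> nat \<Rightarrow> 'k::field \<Rightarrow> 'k \<Rightarrow> int \<Rightarrow> int \<Rightarrow> nat \<Rightarrow> nat \<Rightarrow> 'k hel" where
  "cel n w \<gamma> \<beta> r i 0 l = (if l = 0 then hxg n w r i else 0)"
| "cel n w \<gamma> \<beta> r i (Suc k) l =
     (if l = 0 then
        hmult n w \<gamma> (cel n w \<gamma> \<beta> r i k 0) (hSy n w \<gamma>)
        + hscale \<beta> (hmult n w \<gamma> (hmult n w \<gamma> (hy n w) (cel n w \<gamma> \<beta> r i k 0)) (hSg n w))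
      else if l < Suc k then
        hmult n w \<gamma> (cel n w \<gamma> \<beta> r i k l) (hSy n w \<gamma>)
        + hscale (\<beta> * inverse \<gamma> ^ l)
            (hmult n w \<gamma> (hmult n w \<gamma> (hy n w) (cel n w \<gamma> \<beta> r i k l)) (hSg n w))
        + hmult n w \<gamma> (cel n w \<gamma> \<beta> r i k (l - 1)) (hSg n w)
      else if l = Suc k then
        hmult n w \<gamma> (cel n w \<gamma> \<beta> r i k k) (hSg n w)
      else 0)"

end

(*
  Every c(k,l) with k - l < n is a scalar multiple of a single PBW monomial,
    c(k,l) = a(k,l) x^r g^(i-k) y^(k-l),
  because right multiplication by S(g), S(y) and left multiplication by y only shift exponents
  and produce powers of gamma. With q = gamma^-1 and u = beta gamma^i the scalars satisfy a
  recursion solved by a(k,l) = [k choose l]_q * prod_(j<k-l) q^(j+1) (u q^(l+j) - 1).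
  As q is a primitive n-th root of unity, the Gaussian binomials [n choose l]_q vanish for
  0 < l < n; and a(k,0) is a product of factors u q^j - 1, which are nonzero because
  (u q^j)^n = beta^n <> 1. In c(n,0) the power y^n = 1 - x^w appears:
  c(n,0) = a(n,0) (1 - x^w) x^r g^(i-n) is still nonzero.
*)
theory Submission
  imports Defs
begin

section \<open>Gaussian binomial coefficients and the scalar recursion\<close>

fun qbinom :: "'a::field \<Rightarrow> nat \<Rightarrow> nat \<Rightarrow> 'a" where
  "qbinom q k 0 = 1"
| "qbinom q 0 (Suc l) = 0"
| "qbinom q (Suc k) (Suc l) = q ^ Suc l * qbinom q k (Suc l) + qbinom q k l"

lemma qbinom_eq_0: "k < l \<Longrightarrow> qbinom q k l = 0"
  by (induction q k l rule: qbinom.induct) auto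

lemma qbinom_self [simp]: "qbinom q k k = 1"
  by (induction k) (auto simp: qbinom_eq_0)

lemma qbinom_Suc_Suc': "qbinom q (Suc k) (Suc l) = qbinom q k (Suc l) + q ^ (k - l) * qbinom q k l"
proof (induction k arbitrary: l)
  case 0
  then show ?case by (cases l) auto
next
  case (Suc k)
  show ?case
  proof (cases l)
    case 0
    then show ?thesis using Suc.IH[of 0] by (simp add: algebra_simps)
  next
    case (Suc l')
    show ?thesis
    proof (cases "l \<le> k")
      case True
      then obtain d where d: "k = l + d"
        using le_Suc_ex by blast
      have "qbinom q (Suc (Suc k)) (Suc l)
          = q ^ Suc l * (qbinom q k (Suc l) + q ^ d * qbinom q k l)
            + (qbinom q k l + q ^ Suc d * qbinom q k l')"
        using Suc.IH[of l] Suc.IH[of l'] Suc d by simp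
      also have "\<dots> = (q ^ Suc l * qbinom q k (Suc l) + qbinom q k l)
            + q ^ Suc d * (q ^ l * qbinom q k l + qbinom q k l')"
        using Suc by (simp add: algebra_simps power_add)
      also have "\<dots> = qbinom q (Suc k) (Suc l) + q ^ (Suc k - l) * qbinom q (Suc k) l"
        using Suc d by simp
      finally show ?thesis .
    next
      case False
      then consider "l = Suc k" | "Suc k < l"
        by linarith
      then show ?thesis
        by cases (simp_all add: qbinom_eq_0)
    qed
  qed
qed

lemma qbinom_absorb: "(q ^ Suc l - 1) * qbinom q (Suc k) (Suc l) = (q ^ Suc k - 1) * qbinom q k l"
proof (cases "l \<le> k")
  case True
  then have "q ^ Suc l * q ^ (k - l) = q ^ Suc k"
    by (simp flip: power_add)
  then have "q ^ Suc l * qbinom q (Suc k) (Suc l) = q ^ Suc l * qbinom q k (Suc l) + q ^ Suc k * qbinom q k l"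
    unfolding qbinom_Suc_Suc' by (simp add: distrib_left flip: mult.assoc)
  moreover have "qbinom q (Suc k) (Suc l) = q ^ Suc l * qbinom q k (Suc l) + qbinom q k l"
    by (rule qbinom.simps(3))
  ultimately show ?thesis
    by (simp add: algebra_simps)
qed (simp add: qbinom_eq_0)

lemma qbinom_primitive_root_eq_0:
  assumes "primitive_root n q" and "0 < l" "l < n"
  shows "qbinom q n l = 0"
proof -
  obtain k l' where "n = Suc k" "l = Suc l'"
    using assms(2,3) by (cases n; cases l) auto
  then have "(q ^ l - 1) * qbinom q n l = 0"
    using qbinom_absorb[of q l' k] assms(1) by (simp add: primitive_root_def)
  then show ?thesis using assms by (simp add: primitive_root_def)
qed

definition qpoch :: "'a::field \<Rightarrow> 'a \<Rightarrow> nat \<Rightarrow> nat \<Rightarrow> 'a" where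
  "qpoch q u l d = (\<Prod>j<d. q ^ Suc j * (u * q ^ (l + j) - 1))"

lemma qpoch_0 [simp]: "qpoch q u l 0 = 1"
  by (simp add: qpoch_def)

lemma qpoch_Suc: "qpoch q u l (Suc d) = qpoch q u l d * (q ^ Suc d * (u * q ^ (l + d) - 1))"
  by (simp add: qpoch_def)

lemma qpoch_Suc_shift: "qpoch q u l (Suc d) = q * (u * q ^ l - 1) * q ^ d * qpoch q u (Suc l) d"
proof -
  have "(\<Prod>j<d. q ^ Suc (Suc j) * (u * q ^ (l + Suc j) - 1))
      = (\<Prod>j<d. q * (q ^ Suc j * (u * q ^ (Suc l + j) - 1)))"
    by (simp add: mult.assoc)
  then show ?thesis
    unfolding qpoch_def prod.lessThan_Suc_shift by (simp add: prod.distrib)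
qed

lemma qbinom_Suc_Suc_mult:
  assumes "k = l + d"
  shows "qbinom q (Suc k) (Suc l) * (u * q ^ k - 1)
    = (u * q ^ (k + Suc l) - 1) * qbinom q k (Suc l) + q ^ d * (u * q ^ l - 1) * qbinom q k l"
proof -
  have "qbinom q (Suc k) (Suc l) * (u * q ^ k - 1)
      = u * q ^ k * qbinom q (Suc k) (Suc l) - qbinom q (Suc k) (Suc l)"
    by (simp add: algebra_simps)
  also have "\<dots> = u * q ^ k * (q ^ Suc l * qbinom q k (Suc l) + qbinom q k l)
      - (qbinom q k (Suc l) + q ^ d * qbinom q k l)"
    using assms by (subst qbinom.simps(3), subst qbinom_Suc_Suc') simp
  also have "\<dots> = (u * q ^ (k + Suc l) - 1) * qbinom q k (Suc l) + q ^ d * (u * q ^ l - 1) * qbinom q k l"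
    using assms by (simp add: algebra_simps power_add)
  finally show ?thesis .
qed

fun cel_coeff :: "'a::field \<Rightarrow> 'a \<Rightarrow> nat \<Rightarrow> nat \<Rightarrow> 'a" where
  "cel_coeff q u 0 l = (if l = 0 then 1 else 0)"
| "cel_coeff q u (Suc k) l =
     (if l = 0 then q ^ Suc k * (u * q ^ k - 1) * cel_coeff q u k 0
      else if l < Suc k then
        q ^ (Suc k - l) * ((u * q ^ (k + l) - 1) * cel_coeff q u k l + cel_coeff q u k (l - 1))
      else if l = Suc k then cel_coeff q u k k
      else 0)"

lemma cel_coeff_eq_qbinom_qpoch: "l \<le> k \<Longrightarrow> cel_coeff q u k l = qbinom q k l * qpoch q u l (k - l)"
proof (induction k arbitrary: l)
  case 0
  then show ?case by simp
next
  case (Suc k)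
  consider "l = 0" | l' where "l = Suc l'" "l' < k" | "l = Suc k"
    using Suc.prems by (cases l) (auto simp: le_Suc_eq)
  then show ?case
  proof cases
    case 1
    then show ?thesis using Suc.IH[of 0] by (simp add: qpoch_Suc algebra_simps)
  next
    case 2
    then obtain d where d: "k = l + d"
      using le_Suc_ex[of l k] by auto
    have "cel_coeff q u (Suc k) l = q ^ Suc d * ((u * q ^ (k + l) - 1) * cel_coeff q u k l + cel_coeff q u k l')"
      using 2 d by simp
    also have "\<dots> = q ^ Suc d * ((u * q ^ (k + l) - 1) * (qbinom q k l * qpoch q u l d)
        + qbinom q k l' * (q * (u * q ^ l' - 1) * q ^ d * qpoch q u l d))"
      using 2 d Suc.IH[of l] Suc.IH[of l'] qpoch_Suc_shift[of q u l' d] by simp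
    also have "\<dots> = q ^ Suc d * qpoch q u l d
        * ((u * q ^ (k + Suc l') - 1) * qbinom q k (Suc l') + q ^ Suc d * (u * q ^ l' - 1) * qbinom q k l')"
      using 2 by (simp add: algebra_simps)
    also have "\<dots> = q ^ Suc d * qpoch q u l d * (qbinom q (Suc k) l * (u * q ^ k - 1))"
      using 2 d qbinom_Suc_Suc_mult[of k l' "Suc d" q u] by simp
    also have "\<dots> = qbinom q (Suc k) l * qpoch q u l (Suc k - l)"
      using d by (simp add: qpoch_Suc Suc_diff_le algebra_simps)
    finally show ?thesis .
  next
    case 3
    then show ?thesis using Suc.IH[of k] by simp
  qed
qed

lemma cel_coeff_primitive_root_eq_0:
  assumes "primitive_root n q" and "0 < l" "l < n"
  shows "cel_coeff q u n l = 0"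
  using assms by (simp add: cel_coeff_eq_qbinom_qpoch qbinom_primitive_root_eq_0)

lemma cel_coeff_first_column_neq_0:
  assumes "q \<noteq> 0" and "\<And>j. u * q ^ j \<noteq> 1"
  shows "cel_coeff q u k 0 \<noteq> 0"
  using assms by (induction k) auto

lemma nonzero_if_power_eq_1: "x ^ n = 1 \<Longrightarrow> 0 < n \<Longrightarrow> (x :: 'a::semiring_1) \<noteq> 0"
  by (auto simp: zero_power)

lemma power_nat_mod_eq_power_int:
  fixes \<gamma> :: "'k::field"
  assumes "0 < n" "\<gamma> ^ n = 1"
  shows "\<gamma> ^ nat (m mod int n) = \<gamma> powi m"
proof -
  have "\<gamma> \<noteq> 0"
    using assms by (simp add: nonzero_if_power_eq_1)
  then have "\<gamma> powi m = \<gamma> powi (int n * (m div int n)) * \<gamma> powi (m mod int n)"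
    by (simp flip: power_int_add)
  also have "\<gamma> powi (int n * (m div int n)) = 1"
    by (simp add: power_int_mult assms(2))
  finally show ?thesis
    using assms(1) by (simp add: power_int_nonneg_exp)
qed

lemma power_int_diff_of_nat:
  fixes \<gamma> :: "'k::field"
  assumes "\<gamma> \<noteq> 0"
  shows "\<gamma> powi (i - int k) = \<gamma> powi i * inverse \<gamma> ^ k"
  using assms by (simp add: power_int_diff divide_inverse power_inverse)

lemma primitive_root_inverse: "primitive_root n \<gamma> \<Longrightarrow> primitive_root n (inverse \<gamma>)"
  by (simp add: primitive_root_def power_inverse)

lemma power_mult_root_of_unity:
  fixes \<gamma> :: "'k::field"
  assumes "\<gamma> ^ n = 1"
  shows "(\<beta> * \<gamma> powi i * inverse \<gamma> ^ j) ^ n = \<beta> ^ n"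
proof -
  have "(\<gamma> powi i) ^ n = (\<gamma> ^ n) powi i"
    by (simp add: power_int_power power_int_power' mult.commute)
  moreover have "(inverse \<gamma> ^ j) ^ n = inverse (\<gamma> ^ n) ^ j"
    by (simp add: power_inverse mult.commute flip: power_mult)
  ultimately show ?thesis
    using assms by (simp add: power_mult_distrib)
qed

section \<open>Multiplication of PBW monomials\<close>

text \<open>Key of the basis monomial x^r g^m y^j (j < n) of H; g^m is normalised using g^n = x^w.\<close>

definition pbw_key :: "nat \<Rightarrow> nat \<Rightarrow> int \<Rightarrow> int \<Rightarrow> nat \<Rightarrow> int \<times> nat \<times> nat" where
  "pbw_key n w r m j = (r + int w * (m div int n), nat (m mod int n), j)"

lemma mono_mult_zero: "mono_mult n w \<gamma> 0 p p' = 0"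
  by (cases p; cases p') (simp add: mono_mult_def Let_def)

lemma mono_mult_diff: "mono_mult n w \<gamma> (s - t) p p' = mono_mult n w \<gamma> s p p' - mono_mult n w \<gamma> t p p'"
  by (cases p; cases p') (simp add: mono_mult_def Let_def left_diff_distrib single_diff)

lemma hmult_eq_sum_superset:
  assumes "finite S" "Poly_Mapping.keys f \<subseteq> S" "finite T" "Poly_Mapping.keys h \<subseteq> T"
  shows "hmult n w \<gamma> f h
    = (\<Sum>p\<in>S. \<Sum>q\<in>T. mono_mult n w \<gamma> (Poly_Mapping.lookup f p * Poly_Mapping.lookup h q) p q)"
proof -
  have "(\<Sum>q\<in>Poly_Mapping.keys h. mono_mult n w \<gamma> (Poly_Mapping.lookup f p * Poly_Mapping.lookup h q) p q)
      = (\<Sum>q\<in>T. mono_mult n w \<gamma> (Poly_Mapping.lookup f p * Poly_Mapping.lookup h q) p q)" for p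
    by (rule sum.mono_neutral_left) (use assms in \<open>auto simp: in_keys_iff mono_mult_zero\<close>)
  then have "hmult n w \<gamma> f h
      = (\<Sum>p\<in>Poly_Mapping.keys f. \<Sum>q\<in>T. mono_mult n w \<gamma> (Poly_Mapping.lookup f p * Poly_Mapping.lookup h q) p q)"
    by (simp add: hmult_def)
  also have "\<dots> = (\<Sum>p\<in>S. \<Sum>q\<in>T. mono_mult n w \<gamma> (Poly_Mapping.lookup f p * Poly_Mapping.lookup h q) p q)"
    by (rule sum.mono_neutral_left) (use assms in \<open>auto simp: in_keys_iff mono_mult_zero\<close>)
  finally show ?thesis .
qed

lemma hmult_diff_left: "hmult n w \<gamma> (f - g) h = hmult n w \<gamma> f h - hmult n w \<gamma> g h"
proof -
  let ?S = "Poly_Mapping.keys f \<union> Poly_Mapping.keys g" and ?T = "Poly_Mapping.keys h"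
  show ?thesis
    using hmult_eq_sum_superset[of ?S _ ?T, of "f - g"] hmult_eq_sum_superset[of ?S f ?T]
      hmult_eq_sum_superset[of ?S g ?T]
    by (simp add: keys_diff lookup_minus left_diff_distrib mono_mult_diff sum_subtractf)
qed

lemma hmult_diff_right: "hmult n w \<gamma> h (f - g) = hmult n w \<gamma> h f - hmult n w \<gamma> h g"
proof -
  let ?S = "Poly_Mapping.keys h" and ?T = "Poly_Mapping.keys f \<union> Poly_Mapping.keys g"
  show ?thesis
    using hmult_eq_sum_superset[of ?S _ ?T, of _ "f - g"] hmult_eq_sum_superset[of ?S _ ?T f]
      hmult_eq_sum_superset[of ?S _ ?T g]
    by (simp add: keys_diff lookup_minus right_diff_distrib mono_mult_diff sum_subtractf)
qed

lemma hmult_uminus_right: "hmult n w \<gamma> h (- f) = - hmult n w \<gamma> h f"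
  using hmult_diff_right[of n w \<gamma> h 0 f] by (simp add: hmult_def)

lemma hmult_single:
  "hmult n w \<gamma> (Poly_Mapping.single p s) (Poly_Mapping.single p' t) = mono_mult n w \<gamma> (s * t) p p'"
  by (cases "s = 0"; cases "t = 0") (simp_all add: hmult_def mono_mult_zero)

lemma lookup_hscale: "Poly_Mapping.lookup (hscale \<beta> f) p = \<beta> * Poly_Mapping.lookup f p"
  by (simp add: hscale_def map.rep_eq when_def)

lemma hscale_single: "hscale \<beta> (Poly_Mapping.single p s) = Poly_Mapping.single p (\<beta> * s)"
  by (simp add: hscale_def)

lemma hscale_diff: "hscale \<beta> (f - g) = hscale \<beta> f - hscale \<beta> g"
  by (rule poly_mapping_eqI) (simp add: lookup_hscale lookup_minus right_diff_distrib)

lemma mono_mult_pbw_key: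
  assumes "0 < n" "j < n" "j' < n"
  shows "mono_mult n w \<gamma> s (pbw_key n w r m j) (pbw_key n w r' m' j') =
    (if j + j' < n
     then Poly_Mapping.single (pbw_key n w (r + r') (m + m') (j + j')) (s * (\<gamma> ^ nat (m' mod int n)) ^ j)
     else Poly_Mapping.single (pbw_key n w (r + r') (m + m') (j + j' - n)) (s * (\<gamma> ^ nat (m' mod int n)) ^ j)
        - Poly_Mapping.single (pbw_key n w (r + r' + int w) (m + m') (j + j' - n)) (s * (\<gamma> ^ nat (m' mod int n)) ^ j))"
proof -
  define a b where "a = m mod int n" and "b = m' mod int n"
  have ab: "0 \<le> a" "a < int n" "0 \<le> b" "b < int n"
    using assms by (simp_all add: a_def b_def)
  have div: "(m + m') div int n = m div int n + m' div int n + (a + b) div int n"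
    unfolding a_def b_def by (rule div_add1_eq)
  have mod: "(m + m') mod int n = (a + b) mod int n"
    unfolding a_def b_def by (rule mod_add_eq[symmetric])
  have keys: "pbw_key n w r m j = (r + int w * (m div int n), nat a, j)"
    "pbw_key n w r' m' j' = (r' + int w * (m' div int n), nat b, j')"
    by (simp_all add: pbw_key_def a_def b_def)
  show ?thesis
  proof (cases "a + b < int n")
    case True
    then have "(m + m') div int n = m div int n + m' div int n"
      "nat ((m + m') mod int n) = nat a + nat b" "\<not> n \<le> nat a + nat b"
      using ab div mod by (simp_all add: nat_add_distrib)
    then show ?thesis
      unfolding keys
      by (simp add: mono_mult_def Let_def pbw_key_def b_def[symmetric] algebra_simps flip: power_mult)
  next
    case False
    then have "(a + b) div int n = 1" "(a + b) mod int n = a + b - int n"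
      using ab by (simp_all add: int_div_pos_eq[of _ _ _ "a + b - int n"] int_mod_pos_eq[of _ _ 1])
    then have "(m + m') div int n = m div int n + m' div int n + 1"
      "nat ((m + m') mod int n) = nat a + nat b - n" "n \<le> nat a + nat b"
      using False ab div mod by (simp_all add: nat_diff_distrib nat_add_distrib)
    then show ?thesis
      unfolding keys
      by (simp add: mono_mult_def Let_def pbw_key_def b_def[symmetric] algebra_simps flip: power_mult)
  qed
qed

lemma hxg_eq_single: "hxg n w r i = Poly_Mapping.single (pbw_key n w r i 0) 1"
  by (simp add: hxg_def pbw_key_def)

lemma hSg_eq_single: "hSg n w = Poly_Mapping.single (pbw_key n w 0 (-1) 0) 1"
  by (simp add: hSg_def hxg_eq_single)

lemma hy_eq_single: "2 \<le> n \<Longrightarrow> hy n w = Poly_Mapping.single (pbw_key n w 0 0 1) 1"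
  by (simp add: hy_def pbw_key_def)

lemma hy_eq_if_1:
  "n = 1 \<Longrightarrow> hy n w = Poly_Mapping.single (pbw_key n w 0 0 0) 1 - Poly_Mapping.single (pbw_key n w (int w) 0 0) 1"
  by (simp add: hy_def pbw_key_def)

lemma hSy_eq_single:
  assumes "2 \<le> n" "\<gamma> ^ n = 1"
  shows "hSy n w \<gamma> = Poly_Mapping.single (pbw_key n w 0 (-1) 1) (- inverse \<gamma>)"
  using assms
  by (simp add: hSy_def hy_eq_single hSg_eq_single hmult_single mono_mult_pbw_key
      power_nat_mod_eq_power_int single_uminus)

lemma hmult_single_hSg:
  assumes "0 < n" "\<gamma> ^ n = 1" "j < n"
  shows "hmult n w \<gamma> (Poly_Mapping.single (pbw_key n w r m j) s) (hSg n w)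
    = Poly_Mapping.single (pbw_key n w r (m - 1) j) (s * inverse \<gamma> ^ j)"
  using assms by (simp add: hSg_eq_single hmult_single mono_mult_pbw_key power_nat_mod_eq_power_int)

lemma hmult_single_hSy:
  assumes "\<gamma> ^ n = 1" "Suc j < n"
  shows "hmult n w \<gamma> (Poly_Mapping.single (pbw_key n w r m j) s) (hSy n w \<gamma>)
    = Poly_Mapping.single (pbw_key n w r (m - 1) (Suc j)) (- s * inverse \<gamma> ^ Suc j)"
  using assms
  by (simp add: hSy_eq_single hmult_single mono_mult_pbw_key power_nat_mod_eq_power_int mult.assoc)

lemma hmult_hy_single:
  assumes "\<gamma> ^ n = 1" "Suc j < n"
  shows "hmult n w \<gamma> (hy n w) (Poly_Mapping.single (pbw_key n w r m j) s)
    = Poly_Mapping.single (pbw_key n w r m (Suc j)) (s * \<gamma> powi m)"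
  using assms by (simp add: hy_eq_single hmult_single mono_mult_pbw_key power_nat_mod_eq_power_int)

lemma hmult_single_hSy_wrap:
  assumes "\<gamma> ^ n = 1" "Suc j = n"
  shows "hmult n w \<gamma> (Poly_Mapping.single (pbw_key n w r m j) s) (hSy n w \<gamma>)
    = Poly_Mapping.single (pbw_key n w r (m - 1) 0) (- s)
      - Poly_Mapping.single (pbw_key n w (r + int w) (m - 1) 0) (- s)"
proof (cases "n = 1")
  case True
  then show ?thesis
    using assms
    by (simp add: hSy_def hy_eq_if_1 hSg_eq_single hmult_diff_left hmult_diff_right hmult_uminus_right
        hmult_single mono_mult_pbw_key single_uminus)
next
  case False
  have "inverse \<gamma> * inverse \<gamma> ^ j = 1"
    using assms by (simp add: power_inverse flip: inverse_mult_distrib power_Suc)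
  with False show ?thesis
    using assms by (simp add: hSy_eq_single hmult_single mono_mult_pbw_key power_nat_mod_eq_power_int mult.assoc)
qed

lemma hmult_hy_single_wrap:
  assumes "\<gamma> ^ n = 1" "Suc j = n"
  shows "hmult n w \<gamma> (hy n w) (Poly_Mapping.single (pbw_key n w r m j) s)
    = Poly_Mapping.single (pbw_key n w r m 0) (s * \<gamma> powi m)
      - Poly_Mapping.single (pbw_key n w (r + int w) m 0) (s * \<gamma> powi m)"
proof (cases "n = 1")
  case True
  then show ?thesis
    using assms by (simp add: hy_eq_if_1 hmult_diff_left hmult_single mono_mult_pbw_key add.commute)
next
  case False
  then show ?thesis
    using assms by (simp add: hy_eq_single hmult_single mono_mult_pbw_key power_nat_mod_eq_power_int)
qed

section \<open>The elements c(k,l)\<close>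

lemma cel_eq_single:
  fixes \<gamma> \<beta> :: "'k::field"
  assumes "0 < n" "\<gamma> ^ n = 1" "l \<le> k" "k - l < n"
  shows "cel n w \<gamma> \<beta> r i k l
    = Poly_Mapping.single (pbw_key n w r (i - int k) (k - l)) (cel_coeff (inverse \<gamma>) (\<beta> * \<gamma> powi i) k l)"
  using assms(3,4)
proof (induction k arbitrary: l)
  case 0
  then show ?case by (simp add: hxg_eq_single)
next
  case (Suc k)
  have "\<gamma> \<noteq> 0"
    using assms(1,2) by (simp add: nonzero_if_power_eq_1)
  then have twist: "\<gamma> powi (i - int k) = \<gamma> powi i * inverse \<gamma> ^ k"
    by (rule power_int_diff_of_nat)
  have idx: "i - int k - 1 = i - int (Suc k)"
    by simp
  note steps = hmult_single_hSy[OF assms(2)] hmult_hy_single[OF assms(2)] hmult_single_hSg[OF assms(1,2)]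
    hscale_single idx twist
  consider "l = 0" | "0 < l" "l \<le> k" | "l = Suc k"
    using Suc.prems by linarith
  then show ?case
  proof cases
    case 1
    then have "Suc k < n"
      using Suc.prems by simp
    then show ?thesis
      using 1 Suc.IH[of 0]
      by (simp add: steps flip: single_add) (simp add: algebra_simps)
  next
    case 2
    then have "Suc (k - l) < n" "k - (l - 1) = Suc (k - l)" "Suc k - l = Suc (k - l)"
      using Suc.prems by simp_all
    then show ?thesis
      using 2 Suc.IH[of l] Suc.IH[of "l - 1"]
      by (simp add: steps flip: single_add) (simp add: algebra_simps power_add)
  next
    case 3
    then show ?thesis
      using Suc.IH[of k] assms(1) by (simp add: steps)
  qed
qed

lemma cel_last_row_first_column_eq:
  fixes \<gamma> \<beta> :: "'k::field"
  assumes "0 < n" "\<gamma> ^ n = 1"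
  shows "cel n w \<gamma> \<beta> r i n 0
    = Poly_Mapping.single (pbw_key n w r (i - int n) 0) (cel_coeff (inverse \<gamma>) (\<beta> * \<gamma> powi i) n 0)
      - Poly_Mapping.single (pbw_key n w (r + int w) (i - int n) 0) (cel_coeff (inverse \<gamma>) (\<beta> * \<gamma> powi i) n 0)"
proof -
  obtain k where k: "n = Suc k"
    using assms(1) gr0_implies_Suc by blast
  have "\<gamma> \<noteq> 0"
    using assms by (simp add: nonzero_if_power_eq_1)
  then have twist: "\<gamma> powi (i - int k) = \<gamma> powi i * inverse \<gamma> ^ k"
    by (rule power_int_diff_of_nat)
  have q: "inverse \<gamma> ^ n = 1"
    using assms(2) by (simp add: power_inverse)
  have "cel n w \<gamma> \<beta> r i n 0 = hmult n w \<gamma> (cel n w \<gamma> \<beta> r i k 0) (hSy n w \<gamma>)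
      + hscale \<beta> (hmult n w \<gamma> (hmult n w \<gamma> (hy n w) (cel n w \<gamma> \<beta> r i k 0)) (hSg n w))"
    using k by simp
  also have "\<dots> = Poly_Mapping.single (pbw_key n w r (i - int n) 0) (cel_coeff (inverse \<gamma>) (\<beta> * \<gamma> powi i) n 0)
      - Poly_Mapping.single (pbw_key n w (r + int w) (i - int n) 0) (cel_coeff (inverse \<gamma>) (\<beta> * \<gamma> powi i) n 0)"
    using assms k q
    by (simp add: cel_eq_single hmult_single_hSy_wrap hmult_hy_single_wrap hmult_diff_left
        hmult_single_hSg hscale_diff hscale_single twist algebra_simps flip: single_add single_diff)
  finally show ?thesis .
qed

lemma cel_first_column_neq_0:
  fixes \<gamma> \<beta> :: "'k::field"
  assumes "0 < n" "0 < w" "primitive_root n \<gamma>" "\<beta> ^ n \<noteq> 1" "k \<le> n"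
  shows "cel n w \<gamma> \<beta> r i k 0 \<noteq> 0"
proof -
  let ?q = "inverse \<gamma>" and ?u = "\<beta> * \<gamma> powi i"
  have \<gamma>: "\<gamma> ^ n = 1"
    using assms(3) by (simp add: primitive_root_def)
  then have "\<gamma> \<noteq> 0"
    using assms(1) by (rule nonzero_if_power_eq_1)
  moreover have "?u * ?q ^ j \<noteq> 1" for j
    using power_mult_root_of_unity[OF \<gamma>, of \<beta> i j] assms(4) by auto
  ultimately have coeff: "cel_coeff ?q ?u k 0 \<noteq> 0"
    by (simp add: cel_coeff_first_column_neq_0)
  show ?thesis
  proof (cases "k = n")
    case True
    have "Poly_Mapping.lookup (cel n w \<gamma> \<beta> r i n 0) (pbw_key n w r (i - int n) 0) = cel_coeff ?q ?u n 0"
      using assms(1,2) \<gamma> by (simp add: cel_last_row_first_column_eq lookup_minus lookup_single pbw_key_def)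
    then show ?thesis
      using True coeff by auto
  next
    case False
    then have "Poly_Mapping.lookup (cel n w \<gamma> \<beta> r i k 0) (pbw_key n w r (i - int k) k) = cel_coeff ?q ?u k 0"
      using assms(1,5) \<gamma> by (simp add: cel_eq_single)
    then show ?thesis
      using coeff by auto
  qed
qed

lemma cel_last_row_eq_0:
  fixes \<gamma> \<beta> :: "'k::field"
  assumes "primitive_root n \<gamma>" "0 < l" "l < n"
  shows "cel n w \<gamma> \<beta> r i n l = 0"
proof -
  have "\<gamma> ^ n = 1"
    using assms(1) by (simp add: primitive_root_def)
  moreover have "primitive_root n (inverse \<gamma>)"
    using assms(1) by (rule primitive_root_inverse)
  ultimately show ?thesis
    using assms(2,3) by (simp add: cel_eq_single cel_coeff_primitive_root_eq_0)
qed

theorem lemma3p14: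
  fixes n w :: nat and \<gamma> \<beta> :: "'k::field_char_0" and r i :: int
  assumes "algebraically_closed TYPE('k)"
    and "0 < n" and "0 < w"
    and "primitive_root n \<gamma>"
    and "\<beta> \<noteq> 0" and "\<beta> ^ n \<noteq> 1"
  shows "(\<forall>k\<le>n. cel n w \<gamma> \<beta> r i k 0 \<noteq> 0) \<and>
         (\<forall>l. 1 \<le> l \<and> l \<le> n - 1 \<longrightarrow> cel n w \<gamma> \<beta> r i n l = 0)"
proof -
  have "cel n w \<gamma> \<beta> r i k 0 \<noteq> 0" if "k \<le> n" for k
    using assms(2,3,4,6) that by (rule cel_first_column_neq_0)
  moreover have "cel n w \<gamma> \<beta> r i n l = 0" if "1 \<le> l" "l \<le> n - 1" for l
    using assms(4) that by (simp add: cel_last_row_eq_0)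
  ultimately show ?thesis
    by blast
qed

end
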